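(* Let $k\ge4$ be even and let $(i,j\mid s,t)\in\mathcal{O}(\mathbb{C},k)$ with $i,j,s,t\in\{1,2,\dots,k/2\}$. Then $i<j\iff s<t$, and $i<s\iff j<t$.
   Context: $\phi=\exp(2\pi\mathrm{i}/k)$, $\mathbf{k}=\{1,\dots,k-1\}$, $\mathbf{k}_0=\{0,\dots,k-1\}$. A quadruple $(i,j\mid s,t)\in\mathbf{k}^4$ with $i\ne s$ is an overlap if $\phi^\omega(\phi^j-1)(\phi^s-1)=(\phi^i-1)(\phi^t-1)$ for some $\omega\in\mathbf{k}_0$; it is trivial if one of $i\equiv\pm j$, $j\equiv\pm t$, $t\equiv\pm s$, $s\equiv\pm i\pmod k$ holds, nontrivial otherwise. $\mathcal{O}(\mathbb{C},k)$ is the set of nontrivial overlaps. *)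

theory Defs
  imports "HOL-Analysis.Analysis" "HOL-Number_Theory.Cong"
begin

definition phi :: "nat \<Rightarrow> complex" where
  "phi k = cis (2 * pi / real k)"

definition is_overlap :: "nat \<Rightarrow> nat \<Rightarrow> nat \<Rightarrow> nat \<Rightarrow> nat \<Rightarrow> bool" where
  "is_overlap k i j s t \<longleftrightarrow>
     i \<in> {1..k-1} \<and> j \<in> {1..k-1} \<and> s \<in> {1..k-1} \<and> t \<in> {1..k-1} \<and> i \<noteq> s \<and>
     (\<exists>\<omega>\<in>{0..k-1}. phi k ^ \<omega> * (phi k ^ j - 1) * (phi k ^ s - 1)
                       = (phi k ^ i - 1) * (phi k ^ t - 1))"

definition pm_cong :: "nat \<Rightarrow> nat \<Rightarrow> nat \<Rightarrow> bool" where
  "pm_cong k a b \<longleftrightarrow> [int a = int b] (mod int k) \<or> [int a = - int b] (mod int k)"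

definition is_trivial_overlap :: "nat \<Rightarrow> nat \<Rightarrow> nat \<Rightarrow> nat \<Rightarrow> nat \<Rightarrow> bool" where
  "is_trivial_overlap k i j s t \<longleftrightarrow>
     pm_cong k i j \<or> pm_cong k j t \<or> pm_cong k t s \<or> pm_cong k s i"

definition nontrivial_overlaps :: "nat \<Rightarrow> (nat \<times> nat \<times> nat \<times> nat) set" where
  "nontrivial_overlaps k = {(i, j, s, t). is_overlap k i j s t \<and> \<not> is_trivial_overlap k i j s t}"

end

theory Submission
  imports Defs
begin

text \<open>Taking absolute values in the overlap equation removes the unimodular factor
  \<open>\<phi>\<^sup>\<omega>\<close> and leaves \<open>c j \<cdot> c s = c i \<cdot> c t\<close> for the chord lengths \<open>c a = |\<phi>\<^sup>a - 1|\<close>.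
  On \<open>{1..k/2}\<close> the chord length is positive and strictly increasing, so both claimed
  equivalences follow from comparing the factors of two equal products of positive reals.\<close>

lemma less_iff_less_of_mult_eq:
  fixes a b c d :: "'a::linordered_idom"
  assumes "a * b = c * d" and "0 < b" and "0 < c"
  shows "c < a \<longleftrightarrow> b < d"
proof
  assume "c < a"
  then have "c * b < c * d" using assms by (metis mult_strict_right_mono)
  then show "b < d" using \<open>0 < c\<close> by simp
next
  assume "b < d"
  then have "c * b < a * b" using assms by (metis mult_strict_left_mono)
  then show "c < a" using \<open>0 < b\<close> by simp
qed

lemma norm_cis_minus_one_squared: "(cmod (cis x - 1))\<^sup>2 = 2 - 2 * cos x"
proof -
  have "(cmod (cis x - 1))\<^sup>2 = (cos x - 1)\<^sup>2 + (sin x)\<^sup>2"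
    by (simp add: cmod_power2)
  also have "\<dots> = 2 - 2 * cos x"
    using sin_cos_squared_add[of x] by (simp add: power2_eq_square algebra_simps)
  finally show ?thesis .
qed

lemma phi_power: "phi k ^ a = cis (2 * pi * real a / real k)"
proof -
  have "phi k ^ a = cis (real a * (2 * pi / real k))"
    unfolding phi_def by (rule Complex.DeMoivre)
  then show ?thesis by (simp add: mult.commute)
qed

lemma norm_phi_power [simp]: "cmod (phi k ^ a) = 1"
  by (simp add: phi_power)

lemma strict_mono_on_norm_phi_power_minus_one:
  assumes "0 < k"
  shows "strict_mono_on {0..k div 2} (\<lambda>a. cmod (phi k ^ a - 1))"
proof (rule strict_mono_onI)
  fix a b assume "a \<in> {0..k div 2}" "b \<in> {0..k div 2}" "a < b"
  have "2 * b \<le> k"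
    using \<open>b \<in> {0..k div 2}\<close> by auto
  then have "real b \<le> real k / 2"
    by linarith
  then have "2 * pi * real b / real k \<le> pi"
    using assms by (simp add: field_simps)
  moreover have "2 * pi * real a / real k < 2 * pi * real b / real k"
    using assms \<open>a < b\<close> by (simp add: divide_strict_right_mono)
  ultimately have "cos (2 * pi * real b / real k) < cos (2 * pi * real a / real k)"
    by (intro cos_monotone_0_pi) auto
  then have "(cmod (phi k ^ a - 1))\<^sup>2 < (cmod (phi k ^ b - 1))\<^sup>2"
    by (simp add: phi_power norm_cis_minus_one_squared)
  then show "cmod (phi k ^ a - 1) < cmod (phi k ^ b - 1)"
    by (simp add: power_less_imp_less_base)
qed

lemma norm_phi_power_minus_one_pos:
  assumes "a \<in> {1..k div 2}"
  shows "0 < cmod (phi k ^ a - 1)"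
proof -
  have "0 < k" using assms by auto
  have "cmod (phi k ^ 0 - 1) < cmod (phi k ^ a - 1)"
    by (rule strict_mono_onD[OF strict_mono_on_norm_phi_power_minus_one[OF \<open>0 < k\<close>]])
      (use assms in auto)
  then show ?thesis by simp
qed

lemma overlap_chord_products_eq:
  assumes "is_overlap k i j s t"
  shows "cmod (phi k ^ j - 1) * cmod (phi k ^ s - 1) = cmod (phi k ^ i - 1) * cmod (phi k ^ t - 1)"
proof -
  obtain \<omega> where "phi k ^ \<omega> * (phi k ^ j - 1) * (phi k ^ s - 1) = (phi k ^ i - 1) * (phi k ^ t - 1)"
    using assms unfolding is_overlap_def by blast
  then have "cmod (phi k ^ \<omega> * (phi k ^ j - 1) * (phi k ^ s - 1))
           = cmod ((phi k ^ i - 1) * (phi k ^ t - 1))"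
    by simp
  then show ?thesis by (simp add: norm_mult)
qed

theorem lemma22:
  fixes k i j s t :: nat
  assumes "k \<ge> 4" and "even k"
    and "(i, j, s, t) \<in> nontrivial_overlaps k"
    and "i \<in> {1..k div 2}" and "j \<in> {1..k div 2}" and "s \<in> {1..k div 2}" and "t \<in> {1..k div 2}"
  shows "(i < j \<longleftrightarrow> s < t) \<and> (i < s \<longleftrightarrow> j < t)"
proof -
  define c where "c a = cmod (phi k ^ a - 1)" for a
  have "strict_mono_on {0..k div 2} c"
    using strict_mono_on_norm_phi_power_minus_one[of k] assms(1) unfolding c_def by simp
  then have mono: "strict_mono_on {1..k div 2} c"
    by (rule monotone_on_subset) auto
  have order: "a < b \<longleftrightarrow> c a < c b" if "a \<in> {1..k div 2}" "b \<in> {1..k div 2}" for a b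
    using strict_mono_on_less[OF mono that] by simp
  have pos: "0 < c i" "0 < c j" "0 < c s" "0 < c t"
    unfolding c_def using norm_phi_power_minus_one_pos assms(4-7) by auto
  have prod: "c j * c s = c i * c t"
    using assms(3) overlap_chord_products_eq unfolding nontrivial_overlaps_def c_def by auto
  have "c i < c j \<longleftrightarrow> c s < c t"
    using less_iff_less_of_mult_eq[OF prod pos(3,1)] .
  moreover have "c i < c s \<longleftrightarrow> c j < c t"
    using less_iff_less_of_mult_eq[of "c s" "c j" "c i" "c t"] prod pos by (simp add: mult.commute)
  ultimately show ?thesis
    using order assms(4-7) by simp
qed

end
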